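(* Let $M,N\ge 1$ be integers and $0<t_1<t_2<\dots<t_N$. Let $R$ be the $N\times N$ matrix with entries $R_{lm}=\min(t_l,t_m)$, $l,m=1,\dots,N$. Let $\Sigma_{MN}$ be a symmetric positive definite $MN\times MN$ matrix and let $K$ be a symmetric positive definite $M\times M$ matrix. Let $C_{\Sigma_{MN}}$, $C_R$, $C_K$ be the Cholesky factors of $\Sigma_{MN}$, $R$, $K$ respectively (lower triangular with positive diagonal, $A=C_AC_A^T$). Let $R\otimes K=E\Lambda E^T$ be an eigendecomposition with $E$ orthogonal and $\Lambda$ diagonal with positive diagonal entries, and let $\Lambda^{1/2}$ be the diagonal matrix of the square roots of those entries. If $\epsilon$ is an $MN$-dimensional random vector with distribution $N(0,I_{MN})$, then $$\mathbf{Z}=C_{\Sigma_{MN}}\,\big(C_R^{-1}\otimes C_K^{-1}\big)\,E\,\Lambda^{1/2}\,\epsilon$$ has distribution $N(0,\Sigma_{MN})$.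
   Context: $\otimes$ denotes the Kronecker product: for $A\in\mathbb{R}^{m_A\times n_A}$ and $B$, $A\otimes B$ is the block matrix whose $(i,j)$ block is $a_{ij}B$. In the paper's application, $\Sigma_{MN}$ is the global covariance matrix of the sampled multi-asset Brownian log-return vector (with $(l,m)$ block $\Sigma(t_{\min(l,m)})$, where $\Sigma(t)$ has entries $\int_0^t\sigma_i(s)\sigma_k(s)\rho_{ik}\,ds$), and $K$ is chosen to minimize the Frobenius norm $\|\Sigma_{MN}-R\otimes K\|$; this construction ("Kronecker product approximation", KPA) is used to generate sample paths. *)

theory Defs
  imports "HOL-Probability.Probability" "Jordan_Normal_Form.Determinant"
begin

(* Kronecker product: block (i,j) of A \<otimes> B is A$$(i,j) \<cdot> B *)
definition kron :: "real mat \<Rightarrow> real mat \<Rightarrow> real mat" where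
  "kron A B = mat (dim_row A * dim_row B) (dim_col A * dim_col B)
     (\<lambda>(p,q). A $$ (p div dim_row B, q div dim_col B) * B $$ (p mod dim_row B, q mod dim_col B))"

definition minv :: "real mat \<Rightarrow> real mat" where
  "minv A = (SOME B. B \<in> carrier_mat (dim_row A) (dim_row A) \<and> inverts_mat A B \<and> inverts_mat B A)"

definition sym_pos_def :: "nat \<Rightarrow> real mat \<Rightarrow> bool" where
  "sym_pos_def n A \<longleftrightarrow> A \<in> carrier_mat n n \<and> transpose_mat A = A \<and>
     (\<forall>v \<in> carrier_vec n. v \<noteq> 0\<^sub>v n \<longrightarrow> v \<bullet> (A *\<^sub>v v) > 0)"

definition is_cholesky :: "nat \<Rightarrow> real mat \<Rightarrow> real mat \<Rightarrow> bool" where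
  "is_cholesky n C A \<longleftrightarrow> C \<in> carrier_mat n n \<and> (\<forall>i<n. \<forall>j<n. i < j \<longrightarrow> C $$ (i,j) = 0) \<and>
     (\<forall>i<n. C $$ (i,i) > 0) \<and> A = C * transpose_mat C"

definition is_eigendecomp :: "nat \<Rightarrow> real mat \<Rightarrow> real mat \<Rightarrow> real mat \<Rightarrow> bool" where
  "is_eigendecomp n A E \<Lambda> \<longleftrightarrow> E \<in> carrier_mat n n \<and> \<Lambda> \<in> carrier_mat n n \<and>
     transpose_mat E * E = 1\<^sub>m n \<and> diagonal_mat \<Lambda> \<and> (\<forall>i<n. \<Lambda> $$ (i,i) > 0) \<and>
     A = E * \<Lambda> * transpose_mat E"

definition diag_sqrt :: "real mat \<Rightarrow> real mat" where
  "diag_sqrt \<Lambda> = mat (dim_row \<Lambda>) (dim_col \<Lambda>) (\<lambda>(i,j). if i = j then sqrt (\<Lambda> $$ (i,i)) else 0)"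

definition min_mat :: "nat \<Rightarrow> (nat \<Rightarrow> real) \<Rightarrow> real mat" where
  "min_mat N t = mat N N (\<lambda>(l,m). min (t l) (t m))"

(* R^n as extensional functions on {..<n}, with the product Lebesgue-Borel structure *)
abbreviation Rn :: "nat \<Rightarrow> (nat \<Rightarrow> real) measure" where
  "Rn n \<equiv> PiM {..<n} (\<lambda>_. lborel)"

definition mvnormal :: "nat \<Rightarrow> real mat \<Rightarrow> (nat \<Rightarrow> real) measure" where
  "mvnormal n \<Sigma> = density (Rn n) (\<lambda>x. ennreal ((2 * pi) powr (- real n / 2) * det \<Sigma> powr (- 1 / 2)
       * exp (- (vec n x \<bullet> (minv \<Sigma> *\<^sub>v vec n x)) / 2)))"

definition mat_app :: "nat \<Rightarrow> real mat \<Rightarrow> (nat \<Rightarrow> real) \<Rightarrow> (nat \<Rightarrow> real)" where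
  "mat_app n A x = restrict (\<lambda>i. (A *\<^sub>v vec n x) $ i) {..<n}"

end

theory Submission
  imports Defs
begin

text \<open>With \<open>A = C\<^sub>\<Sigma> (C\<^sub>R\<^sup>-\<^sup>1 \<otimes> C\<^sub>K\<^sup>-\<^sup>1) E \<Lambda>\<^sup>1\<^sup>/\<^sup>2\<close> we have \<open>Z = A \<epsilon>\<close>. Since \<open>R \<otimes> K = E \<Lambda> E\<^sup>T\<close>, the
  mixed-product rule gives \<open>(C\<^sub>R\<^sup>-\<^sup>1 \<otimes> C\<^sub>K\<^sup>-\<^sup>1) (R \<otimes> K) (C\<^sub>R\<^sup>-\<^sup>1 \<otimes> C\<^sub>K\<^sup>-\<^sup>1)\<^sup>T = I\<close>, hence
  \<open>A A\<^sup>T = C\<^sub>\<Sigma> C\<^sub>\<Sigma>\<^sup>T = \<Sigma>\<close>. A linear image \<open>A \<epsilon>\<close> of a standard normal vector with \<open>A\<close>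
  invertible has law \<open>N(0, A A\<^sup>T)\<close> by the substitution rule
  \<open>\<integral> f (A x) dx = \<bar>det A\<bar>\<^sup>-\<^sup>1 \<integral> f x dx\<close>; Gauss--Jordan elimination writes \<open>A\<^sup>-\<^sup>1\<close> as a product of
  elementary matrices, for which the rule is a one-dimensional affine substitution under Fubini.\<close>

section \<open>Kronecker products\<close>

lemma sum_atLeast0LessThan_mult_div_mod:
  fixes g :: "nat \<Rightarrow> nat \<Rightarrow> 'a::comm_monoid_add"
  shows "(\<Sum>r\<in>{0..<b*d}. g (r div d) (r mod d)) = (\<Sum>i\<in>{0..<b}. \<Sum>j\<in>{0..<d}. g i j)"
proof (induction b)
  case (Suc b)
  have "{0..<Suc b * d} = {0..<b*d} \<union> {b*d..<b*d+d}" by auto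
  then have "(\<Sum>r\<in>{0..<Suc b * d}. g (r div d) (r mod d))
      = (\<Sum>r\<in>{0..<b*d}. g (r div d) (r mod d)) + (\<Sum>r\<in>{b*d..<b*d+d}. g (r div d) (r mod d))"
    by (simp add: sum.union_disjoint)
  also have "(\<Sum>r\<in>{b*d..<b*d+d}. g (r div d) (r mod d))
      = (\<Sum>j\<in>{0..<d}. g ((b*d + j) div d) ((b*d + j) mod d))"
    by (rule sum.reindex_bij_witness[of _ "\<lambda>j. b*d + j" "\<lambda>r. r - b*d"]) auto
  also have "\<dots> = (\<Sum>j\<in>{0..<d}. g b j)"
    by (rule sum.cong) auto
  finally show ?case using Suc by simp
qed simp

lemma dim_kron [simp]:
  "dim_row (kron A B) = dim_row A * dim_row B" "dim_col (kron A B) = dim_col A * dim_col B"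
  unfolding kron_def by auto

lemma index_kron:
  "p < dim_row A * dim_row B \<Longrightarrow> q < dim_col A * dim_col B \<Longrightarrow>
   kron A B $$ (p,q) = A $$ (p div dim_row B, q div dim_col B) * B $$ (p mod dim_row B, q mod dim_col B)"
  unfolding kron_def by simp

lemma kron_carrier_mat: "A \<in> carrier_mat a b \<Longrightarrow> B \<in> carrier_mat c d \<Longrightarrow> kron A B \<in> carrier_mat (a*c) (b*d)"
  by auto

lemma mod_less_of_less_mult: "(p::nat) < a * c \<Longrightarrow> p mod c < c"
  by (cases "c = 0") auto

lemma kron_mult:
  assumes A: "A \<in> carrier_mat a b" and B: "B \<in> carrier_mat c d"
    and C: "C \<in> carrier_mat b e" and D: "D \<in> carrier_mat d f"
  shows "kron A B * kron C D = kron (A * C) (B * D)"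
proof (rule eq_matI)
  fix p q assume "p < dim_row (kron (A * C) (B * D))" and "q < dim_col (kron (A * C) (B * D))"
  then have p: "p < a * c" and q: "q < e * f" using A B C D by auto
  note bounds = less_mult_imp_div_less mod_less_of_less_mult
  have "(kron A B * kron C D) $$ (p,q) = (\<Sum>r\<in>{0..<b*d}. kron A B $$ (p, r) * kron C D $$ (r, q))"
    using p q A B C D by (simp add: scalar_prod_def)
  also have "\<dots> = (\<Sum>r\<in>{0..<b*d}. (\<lambda>i j. (A $$ (p div c, i) * C $$ (i, q div f))
                                     * (B $$ (p mod c, j) * D $$ (j, q mod f))) (r div d) (r mod d))"
    using p q A B C D by (intro sum.cong) (auto simp: index_kron algebra_simps bounds)
  also have "\<dots> = (\<Sum>i\<in>{0..<b}. \<Sum>j\<in>{0..<d}. (A $$ (p div c, i) * C $$ (i, q div f))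
                                          * (B $$ (p mod c, j) * D $$ (j, q mod f)))"
    by (rule sum_atLeast0LessThan_mult_div_mod)
  also have "\<dots> = (\<Sum>i\<in>{0..<b}. A $$ (p div c, i) * C $$ (i, q div f))
                 * (\<Sum>j\<in>{0..<d}. B $$ (p mod c, j) * D $$ (j, q mod f))"
    by (simp add: sum_product)
  also have "\<dots> = kron (A * C) (B * D) $$ (p,q)"
    using p q A B C D by (simp add: index_kron scalar_prod_def bounds)
  finally show "(kron A B * kron C D) $$ (p,q) = kron (A * C) (B * D) $$ (p,q)" .
qed (use A B C D in auto)

lemma transpose_kron: "transpose_mat (kron A B) = kron (transpose_mat A) (transpose_mat B)"
  by (rule eq_matI) (auto simp: index_kron less_mult_imp_div_less mod_less_of_less_mult)

lemma kron_one: "kron (1\<^sub>m a) (1\<^sub>m b) = 1\<^sub>m (a*b)"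
proof (rule eq_matI)
  fix p q assume "p < dim_row (1\<^sub>m (a * b) :: real mat)" "q < dim_col (1\<^sub>m (a * b) :: real mat)"
  then have p: "p < a * b" and q: "q < a * b" by auto
  have "(p div b = q div b \<and> p mod b = q mod b) = (p = q)"
    by (metis div_mult_mod_eq)
  then show "kron (1\<^sub>m a) (1\<^sub>m b) $$ (p, q) = (1\<^sub>m (a*b) :: real mat) $$ (p, q)"
    using p q by (auto simp: index_kron less_mult_imp_div_less mod_less_of_less_mult)
qed auto


section \<open>Inverses and factorisations\<close>

lemma minv_eqI:
  assumes A: "A \<in> carrier_mat n n" and B: "B \<in> carrier_mat n n"
    and AB: "A * B = 1\<^sub>m n" and BA: "B * A = 1\<^sub>m n"
  shows "minv A = B"
proof -
  have "\<exists>B. B \<in> carrier_mat (dim_row A) (dim_row A) \<and> inverts_mat A B \<and> inverts_mat B A"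
    using A B AB BA by (intro exI[of _ B]) (auto simp: inverts_mat_def)
  from someI_ex[OF this] have B': "minv A \<in> carrier_mat n n" "minv A * A = 1\<^sub>m n"
    using A unfolding minv_def inverts_mat_def by auto
  have "minv A = minv A * (A * B)" using AB B'(1) by simp
  also have "\<dots> = (minv A * A) * B" using A B B'(1) by simp
  finally show ?thesis using B'(2) B by simp
qed

lemma inverse_mat_exists:
  assumes A: "(A :: real mat) \<in> carrier_mat n n" and "det A \<noteq> 0"
  obtains B where "B \<in> carrier_mat n n" "A * B = 1\<^sub>m n" "B * A = 1\<^sub>m n"
  using det_non_zero_imp_unit[OF assms, of undefined] unfolding Units_def ring_mat_def
  by auto

lemma det_mult_transpose_self:
  assumes "(A :: real mat) \<in> carrier_mat n n"
  shows "det (A * transpose_mat A) = det A * det A"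
  using det_mult[OF assms transpose_carrier_mat[THEN iffD2, OF assms]] det_transpose[OF assms] by simp

lemma det_cholesky_pos:
  assumes "is_cholesky n C A"
  shows "det C > 0"
proof -
  have C: "C \<in> carrier_mat n n" and lt: "\<And>i j. i < j \<Longrightarrow> j < n \<Longrightarrow> C $$ (i,j) = 0"
    and pos: "\<And>i. i < n \<Longrightarrow> C $$ (i,i) > 0"
    using assms unfolding is_cholesky_def by auto
  have "det C = prod_list (diag_mat C)" by (rule det_lower_triangular[OF lt C])
  also have "\<dots> = (\<Prod>i = 0..<n. C $$ (i,i))" using C by (simp add: prod_list_diag_prod)
  also have "\<dots> > 0" using pos by (intro prod_pos) auto
  finally show ?thesis .
qed

lemma cholesky_minv:
  assumes "is_cholesky n C A"
  shows "minv C \<in> carrier_mat n n" "minv C * C = 1\<^sub>m n"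
proof -
  have C: "C \<in> carrier_mat n n" using assms unfolding is_cholesky_def by auto
  obtain B where B: "B \<in> carrier_mat n n" "C * B = 1\<^sub>m n" "B * C = 1\<^sub>m n"
    using inverse_mat_exists[OF C] det_cholesky_pos[OF assms] by force
  then show "minv C \<in> carrier_mat n n" "minv C * C = 1\<^sub>m n" using minv_eqI[OF C B] by auto
qed

lemma cholesky_whitening:
  assumes "is_cholesky n C A"
  shows "minv C * A * transpose_mat (minv C) = 1\<^sub>m n"
proof -
  have C: "C \<in> carrier_mat n n" and A: "A = C * transpose_mat C"
    using assms unfolding is_cholesky_def by auto
  note inv = cholesky_minv[OF assms]
  have "minv C * A * transpose_mat (minv C) = (minv C * C) * transpose_mat (minv C * C)"
    using C inv(1) unfolding A
    by (simp add: transpose_mult[of _ n n _ n] assoc_mult_mat[of _ n n _ n _ n])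
  then show ?thesis using inv(2) by simp
qed

lemma diag_sqrt_carrier_mat: "L \<in> carrier_mat n n \<Longrightarrow> diag_sqrt L \<in> carrier_mat n n"
  unfolding diag_sqrt_def by auto

lemma diag_sqrt_mult_transpose:
  assumes L: "L \<in> carrier_mat n n" and diag: "diagonal_mat L" and pos: "\<And>i. i < n \<Longrightarrow> L $$ (i,i) > 0"
  shows "diag_sqrt L * transpose_mat (diag_sqrt L) = L"
proof (rule eq_matI)
  fix i j assume "i < dim_row L" "j < dim_col L"
  then have i: "i < n" and j: "j < n" using L by auto
  let ?D = "diag_sqrt L"
  have "(?D * transpose_mat ?D) $$ (i,j) = (\<Sum>k\<in>{0..<n}. ?D $$ (i,k) * ?D $$ (j,k))"
    using i j L diag_sqrt_carrier_mat[OF L] by (simp add: scalar_prod_def)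
  also have "\<dots> = ?D $$ (i,i) * ?D $$ (j,i)"
    using i j L by (subst sum.remove[of _ i]) (auto simp: diag_sqrt_def intro!: sum.neutral)
  also have "\<dots> = L $$ (i,j)"
    using i j L diag pos[OF i] unfolding diag_sqrt_def diagonal_mat_def by (auto simp: less_imp_le)
  finally show "(?D * transpose_mat ?D) $$ (i,j) = L $$ (i,j)" .
qed (use L diag_sqrt_carrier_mat[OF L] in auto)

lemma kpa_sampling_matrix:
  fixes R \<Sigma> K C\<^sub>\<Sigma> C\<^sub>R C\<^sub>K E \<Lambda> :: "real mat"
  assumes chol_\<Sigma>: "is_cholesky (M * N) C\<^sub>\<Sigma> \<Sigma>"
    and chol_R: "is_cholesky N C\<^sub>R R" and chol_K: "is_cholesky M C\<^sub>K K"
    and eig: "is_eigendecomp (N * M) (kron R K) E \<Lambda>"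
  defines "A \<equiv> C\<^sub>\<Sigma> * kron (minv C\<^sub>R) (minv C\<^sub>K) * E * diag_sqrt \<Lambda>"
  shows "A \<in> carrier_mat (M * N) (M * N)" "A * transpose_mat A = \<Sigma>"
proof -
  define n where "n = M * N"
  have nn: "N * M = n" by (simp add: n_def)
  have C\<^sub>\<Sigma>: "C\<^sub>\<Sigma> \<in> carrier_mat n n" and \<Sigma>: "\<Sigma> = C\<^sub>\<Sigma> * transpose_mat C\<^sub>\<Sigma>"
    using chol_\<Sigma> by (auto simp: is_cholesky_def n_def)
  have R: "R \<in> carrier_mat N N" and K: "K \<in> carrier_mat M M"
    using chol_R chol_K by (auto simp: is_cholesky_def)
  have E: "E \<in> carrier_mat n n" and \<Lambda>: "\<Lambda> \<in> carrier_mat n n"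
    and RK: "kron R K = E * \<Lambda> * transpose_mat E"
    using eig unfolding is_eigendecomp_def nn by auto
  have D: "diag_sqrt \<Lambda> \<in> carrier_mat n n" "diag_sqrt \<Lambda> * transpose_mat (diag_sqrt \<Lambda>) = \<Lambda>"
    using eig diag_sqrt_carrier_mat[OF \<Lambda>] diag_sqrt_mult_transpose[OF \<Lambda>]
    unfolding is_eigendecomp_def nn by auto
  note inv_R = cholesky_minv[OF chol_R] and inv_K = cholesky_minv[OF chol_K]
  define W where "W = kron (minv C\<^sub>R) (minv C\<^sub>K)"
  have W: "W \<in> carrier_mat n n"
    unfolding W_def using kron_carrier_mat[OF inv_R(1) inv_K(1)] nn by simp
  have whiten: "W * kron R K * transpose_mat W = 1\<^sub>m n"
  proof -
    have "W * kron R K * transpose_mat W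
        = kron (minv C\<^sub>R * R * transpose_mat (minv C\<^sub>R)) (minv C\<^sub>K * K * transpose_mat (minv C\<^sub>K))"
      unfolding W_def transpose_kron kron_mult[OF inv_R(1) inv_K(1) R K]
      by (rule kron_mult[of _ N N _ M M]) (use inv_R(1) inv_K(1) R K in auto)
    then show ?thesis
      using cholesky_whitening[OF chol_R] cholesky_whitening[OF chol_K] kron_one nn by simp
  qed
  have A: "A = C\<^sub>\<Sigma> * W * E * diag_sqrt \<Lambda>" unfolding A_def W_def ..
  show "A \<in> carrier_mat (M * N) (M * N)"
    unfolding A n_def[symmetric] using C\<^sub>\<Sigma> W E D(1) by (meson mult_carrier_mat)
  have "A * transpose_mat A
      = C\<^sub>\<Sigma> * (W * (E * (diag_sqrt \<Lambda> * transpose_mat (diag_sqrt \<Lambda>)) * transpose_mat E) * transpose_mat W)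
        * transpose_mat C\<^sub>\<Sigma>"
    unfolding A using C\<^sub>\<Sigma> W E D(1)
    by (simp add: transpose_mult[of _ n n _ n] assoc_mult_mat[of _ n n _ n _ n])
  also have "\<dots> = \<Sigma>" unfolding D(2) RK[symmetric] whiten \<Sigma> using C\<^sub>\<Sigma> by simp
  finally show "A * transpose_mat A = \<Sigma>" .
qed

section \<open>Products of elementary matrices\<close>

text \<open>The library lemma \<open>gauss_jordan_transform\<close> only records that the transformation matrix of
  Gauss--Jordan elimination is a unit; its proof is redone here keeping track of the elementary
  factors.\<close>

inductive_set elementary_products :: "nat \<Rightarrow> 'a :: field mat set" for n where
  one: "1\<^sub>m n \<in> elementary_products n"
| multrow: "P \<in> elementary_products n \<Longrightarrow> k < n \<Longrightarrow> a \<noteq> 0 \<Longrightarrow>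
    P * multrow_mat n k a \<in> elementary_products n"
| addrow: "P \<in> elementary_products n \<Longrightarrow> k < n \<Longrightarrow> l < n \<Longrightarrow> k \<noteq> l \<Longrightarrow>
    P * addrow_mat n a k l \<in> elementary_products n"
| swaprows: "P \<in> elementary_products n \<Longrightarrow> k < n \<Longrightarrow> l < n \<Longrightarrow>
    P * swaprows_mat n k l \<in> elementary_products n"

lemma elementary_products_carrier: "P \<in> elementary_products n \<Longrightarrow> P \<in> carrier_mat n n"
  by (induction rule: elementary_products.induct) auto

lemma elementary_products_mult_assoc:
  assumes "P \<in> elementary_products n" "E \<in> carrier_mat n n" "A \<in> carrier_mat n nc"
  shows "P * (E * A) = (P * E) * A"
  using elementary_products_carrier[OF assms(1)] assms(2,3) by simp

lemma eliminate_entries_rec_elementary: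
  assumes "P \<in> elementary_products nr" "B \<in> carrier_mat nr nc" "i < nr"
    and "\<And>a i'. (a, i') \<in> set is \<Longrightarrow> i' < nr \<and> i' \<noteq> i"
  shows "\<exists>P' \<in> elementary_products nr. P * eliminate_entries_rec B i is = P' * B"
  using assms
proof (induction "is" arbitrary: B)
  case Nil
  then show ?case by auto
next
  case (Cons ai' "is")
  obtain a i' where ai': "ai' = (a, i')" by force
  have i': "i' < nr" "i' \<noteq> i" using Cons.prems(4) ai' by auto
  obtain P' where P': "P' \<in> elementary_products nr"
    and eq: "P * eliminate_entries_rec (addrow a i' i B) i is = P' * addrow a i' i B"
    using Cons.IH[of "addrow a i' i B"] Cons.prems by auto
  have "P * eliminate_entries_rec B i (ai' # is) = P' * (addrow_mat nr a i' i * B)"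
    unfolding ai' using eq addrow_mat[OF Cons.prems(2) Cons.prems(3)] by simp
  also have "\<dots> = (P' * addrow_mat nr a i' i) * B"
    by (rule elementary_products_mult_assoc[OF P' _ Cons.prems(2)]) simp
  finally show ?case
    using elementary_products.addrow[OF P' i'(1) Cons.prems(3) i'(2)] by blast
qed

lemma gauss_jordan_main_elementary:
  assumes "A \<in> carrier_mat nr nc" and "gauss_jordan_main (A :: 'a :: field mat) B i j = (A', B')"
  shows "\<exists>P \<in> elementary_products nr. A' = P * A"
  using assms
proof (induction A B i j rule: gauss_jordan_main.induct)
  case (1 A B i j)
  note A = "1.prems"(1) and res = "1.prems"(2)
  have dim: "dim_row A = nr" "dim_col A = nc" using A by auto
  note IH = "1.IH"[OF dim[symmetric]]
  note step = gauss_jordan_main.simps[of A B i j] Let_def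
  have right_mult: "\<exists>P \<in> elementary_products nr. A' = P * A"
    if "P \<in> elementary_products nr" "P * E \<in> elementary_products nr" "E \<in> carrier_mat nr nr"
       "A' = P * (E * A)" for P E
    using that elementary_products_mult_assoc[OF that(1,3) A] by auto
  show ?case
  proof (cases "i < nr \<and> j < nc")
    case False
    then have "A' = A" using res unfolding step dim if_not_P[OF False] by simp
    then show ?thesis using A elementary_products.one by (intro bexI[of _ "1\<^sub>m nr"]) auto
  next
    case valid: True
    note IH = IH[OF valid refl]
    show ?thesis
    proof (cases "A $$ (i,j) = 0")
      case zero: True
      show ?thesis
      proof (cases "[i' . i' <- [Suc i ..< nr], A $$ (i',j) \<noteq> 0]")
        case Nil
        then have "gauss_jordan_main A B i (Suc j) = (A', B')"
          using res zero valid unfolding step dim Nil by simp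
        then show ?thesis using IH(1)[OF zero Nil A] by simp
      next
        case (Cons i' iis)
        then have "i' \<in> set [i' . i' <- [Suc i ..< nr], A $$ (i',j) \<noteq> 0]" by simp
        then have i': "i' < nr" by simp
        have "gauss_jordan_main (swaprows i i' A) (swaprows i i' B) i j = (A', B')"
          using res zero valid unfolding step dim Cons by simp
        then obtain P where P: "P \<in> elementary_products nr" and eq: "A' = P * swaprows i i' A"
          using IH(2)[OF zero Cons] A by auto
        show ?thesis
          using valid i' eq swaprows_mat[OF A, of i i'] elementary_products.swaprows[OF P]
          by (intro right_mult[OF P, of "swaprows_mat nr i i'"]) auto
      qed
    next
      case nonzero: False
      show ?thesis
      proof (cases "A $$ (i,j) = 1")
        case one: True
        let ?ais = "map (\<lambda>i'. (- A $$ (i',j), i')) (filter (\<lambda>i'. i' \<noteq> i) [0 ..< nr])"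
        let ?E = "eliminate_entries (\<lambda>i. A $$ (i,j)) A i j"
        have "gauss_jordan_main ?E (eliminate_entries (\<lambda>i. A $$ (i,j)) B i j) (Suc i) (Suc j) = (A', B')"
          using res nonzero one valid unfolding step dim by simp
        then obtain P where P: "P \<in> elementary_products nr" and eq: "A' = P * ?E"
          using IH(3)[OF nonzero one refl carrier_eliminate_entries(1)[OF A]] by blast
        have "?E = eliminate_entries_rec A i ?ais"
          using eliminate_entries_convert[of j A i A] valid dim by simp
        moreover have "\<exists>P' \<in> elementary_products nr. P * eliminate_entries_rec A i ?ais = P' * A"
          by (rule eliminate_entries_rec_elementary[OF P A]) (use valid in auto)
        ultimately show ?thesis using eq by auto
      next
        case False
        let ?inv = "inverse (A $$ (i,j))"
        have "gauss_jordan_main (multrow i ?inv A) (multrow i ?inv B) i j = (A', B')"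
          using res nonzero False valid unfolding step dim by simp
        then obtain P where P: "P \<in> elementary_products nr" and eq: "A' = P * multrow i ?inv A"
          using IH(4)[OF nonzero False refl] A by auto
        show ?thesis
          using valid nonzero eq multrow_mat[OF A, of i ?inv] elementary_products.multrow[OF P]
          by (intro right_mult[OF P, of "multrow_mat nr i ?inv"]) auto
      qed
    qed
  qed
qed

lemma invertible_elementary_products:
  assumes A: "A \<in> carrier_mat n n" and "det A \<noteq> (0 :: 'a :: field)"
  obtains P where "P \<in> elementary_products n" "P * A = 1\<^sub>m n"
proof -
  obtain A' B' where res: "gauss_jordan A (1\<^sub>m n) = (A', B')" by force
  have "A' = 1\<^sub>m n"
    using gauss_jordan_inverse_other_direction[OF det_non_zero_imp_unit[OF assms] one_carrier_mat] res
    by simp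
  then show ?thesis
    using gauss_jordan_main_elementary[OF A res[unfolded gauss_jordan_def]] that by auto
qed

section \<open>Linear change of variables in \<open>Rn\<close>\<close>

interpretation lborel_product: product_sigma_finite "\<lambda>_::nat. lborel :: real measure"
  by (simp add: product_sigma_finite_def lborel.sigma_finite_measure_axioms)

text \<open>Fubini reduces an affine substitution in one coordinate to the one-dimensional
  substitution rule, provided the translation part does not depend on that coordinate.\<close>

lemma nn_integral_PiM_coordinate_affine:
  fixes a :: real and b :: "(nat \<Rightarrow> real) \<Rightarrow> real"
  assumes k: "k < n" and a: "a \<noteq> 0" and [measurable]: "b \<in> borel_measurable (Rn n)"
    and b_indep: "\<And>x y. b (x(k := y)) = b x"
    and f[measurable]: "f \<in> borel_measurable (Rn n)"
  shows "(\<integral>\<^sup>+x. f (x(k := a * x k + b x)) \<partial>Rn n) = ennreal (1 / \<bar>a\<bar>) * (\<integral>\<^sup>+x. f x \<partial>Rn n)"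
proof -
  define I where "I = {..<n} - {k}"
  have ins: "{..<n} = insert k I" and kI: "k \<notin> I" and fI: "finite I" using k by (auto simp: I_def)
  have "(\<lambda>x. x(k := a * x k + b x)) \<in> measurable (Rn n) (Rn n)"
    by (rule measurable_fun_upd[where J="{..<n}"]) (use k in auto)
  then have subst_measurable: "(\<lambda>x. f (x(k := a * x k + b x))) \<in> borel_measurable (Rn n)"
    using measurable_comp[OF _ f] by (simp add: o_def)
  have inner: "(\<integral>\<^sup>+y. f (x(k := a * y + b x)) \<partial>lborel) = ennreal (1 / \<bar>a\<bar>) * (\<integral>\<^sup>+y. f (x(k := y)) \<partial>lborel)"
    if x: "x \<in> space (Pi\<^sub>M I (\<lambda>_. lborel))" for x
  proof -
    have "(\<lambda>y. x(k := y)) \<in> measurable lborel (Rn n)"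
      unfolding ins using measurable_component_update[OF x kI] by simp
    then have g: "(\<lambda>y. f (x(k := y))) \<in> borel_measurable borel"
      using measurable_comp[OF _ f] by (simp add: o_def)
    have "ennreal (1 / \<bar>a\<bar>) * ennreal \<bar>a\<bar> = 1" using a by (simp add: ennreal_mult[symmetric])
    then show ?thesis
      using nn_integral_real_affine[OF g a, of "b x"]
      by (simp add: add.commute mult.assoc[symmetric])
  qed
  have "(\<integral>\<^sup>+x. f (x(k := a * x k + b x)) \<partial>Rn n)
      = (\<integral>\<^sup>+x. (\<integral>\<^sup>+y. f (x(k := a * y + b x)) \<partial>lborel) \<partial>Pi\<^sub>M I (\<lambda>_. lborel))"
    unfolding ins by (subst lborel_product.product_nn_integral_insert[OF fI kI])
      (use subst_measurable ins in \<open>simp_all add: b_indep\<close>)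
  also have "\<dots> = (\<integral>\<^sup>+x. ennreal (1 / \<bar>a\<bar>) * (\<integral>\<^sup>+y. f (x(k := y)) \<partial>lborel) \<partial>Pi\<^sub>M I (\<lambda>_. lborel))"
    by (rule nn_integral_cong) (rule inner)
  also have "\<dots> = ennreal (1 / \<bar>a\<bar>) * (\<integral>\<^sup>+x. (\<integral>\<^sup>+y. f (x(k := y)) \<partial>lborel) \<partial>Pi\<^sub>M I (\<lambda>_. lborel))"
  proof (rule nn_integral_cmult)
    have [measurable]: "f \<in> borel_measurable (Pi\<^sub>M (insert k I) (\<lambda>_. lborel))" using f ins by simp
    show "(\<lambda>x. \<integral>\<^sup>+y. f (x(k := y)) \<partial>lborel) \<in> borel_measurable (Pi\<^sub>M I (\<lambda>_. lborel))"
      by measurable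
  qed
  also have "(\<integral>\<^sup>+x. (\<integral>\<^sup>+y. f (x(k := y)) \<partial>lborel) \<partial>Pi\<^sub>M I (\<lambda>_. lborel)) = (\<integral>\<^sup>+x. f x \<partial>Rn n)"
    unfolding ins by (rule lborel_product.product_nn_integral_insert[OF fI kI, symmetric]) (use f ins in simp)
  finally show ?thesis .
qed

lemma space_Rn: "x \<in> space (Rn n) \<longleftrightarrow> (\<forall>i. i \<ge> n \<longrightarrow> x i = undefined)"
  by (auto simp: space_PiM PiE_def extensional_def)

lemma mat_app_eq_sum:
  assumes "A \<in> carrier_mat n n"
  shows "mat_app n A x = (\<lambda>i\<in>{..<n}. \<Sum>j<n. A $$ (i,j) * x j)"
  using assms unfolding mat_app_def
  by (intro ext) (auto simp: scalar_prod_def lessThan_atLeast0 intro!: sum.cong)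

lemma mat_app_in_space: "mat_app n A x \<in> space (Rn n)"
  by (auto simp: mat_app_def space_Rn)

lemma measurable_mat_app [measurable]:
  assumes "A \<in> carrier_mat n n"
  shows "mat_app n A \<in> measurable (Rn n) (Rn n)"
  unfolding mat_app_eq_sum[OF assms] by measurable

lemma mat_app_mult:
  assumes "A \<in> carrier_mat n n" "B \<in> carrier_mat n n"
  shows "mat_app n (A * B) x = mat_app n A (mat_app n B x)"
proof -
  have "vec n (mat_app n B x) = B *\<^sub>v vec n x"
    using assms by (intro eq_vecI) (auto simp: mat_app_def)
  then show ?thesis using assms unfolding mat_app_def
    by (simp add: assoc_mult_mat_vec[of A n n B n "vec n x"])
qed

lemma sum_lessThan_eq_single:
  fixes n :: nat and g :: "nat \<Rightarrow> 'a::comm_monoid_add"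
  assumes "i < n" "\<And>j. j < n \<Longrightarrow> j \<noteq> i \<Longrightarrow> g j = 0"
  shows "(\<Sum>j<n. g j) = g i"
proof -
  have "(\<Sum>j<n. g j) = g i + (\<Sum>j\<in>{..<n}-{i}. g j)"
    using assms(1) by (subst sum.remove[of _ i]) auto
  also have "(\<Sum>j\<in>{..<n}-{i}. g j) = 0" using assms by (intro sum.neutral) auto
  finally show ?thesis by simp
qed

lemma sum_lessThan_eq_pair:
  fixes n :: nat and g :: "nat \<Rightarrow> 'a::comm_monoid_add"
  assumes "i < n" "l < n" "i \<noteq> l" "\<And>j. j < n \<Longrightarrow> j \<noteq> i \<Longrightarrow> j \<noteq> l \<Longrightarrow> g j = 0"
  shows "(\<Sum>j<n. g j) = g i + g l"
proof -
  have "(\<Sum>j<n. g j) = g i + (\<Sum>j\<in>{..<n}-{i}. g j)"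
    using assms(1) by (subst sum.remove[of _ i]) auto
  also have "(\<Sum>j\<in>{..<n}-{i}. g j) = g l + (\<Sum>j\<in>{..<n}-{i}-{l}. g j)"
    using assms by (subst sum.remove[of _ l]) auto
  also have "(\<Sum>j\<in>{..<n}-{i}-{l}. g j) = 0" using assms by (intro sum.neutral) auto
  finally show ?thesis by simp
qed

lemma mat_app_one: "x \<in> space (Rn n) \<Longrightarrow> mat_app n (1\<^sub>m n) x = x"
  unfolding mat_app_eq_sum[OF one_carrier_mat]
  by (rule ext) (auto simp: space_Rn sum_lessThan_eq_single[of _ n])

lemma mat_app_multrow:
  "x \<in> space (Rn n) \<Longrightarrow> k < n \<Longrightarrow> mat_app n (multrow_mat n k a) x = x(k := a * x k)"
  unfolding mat_app_eq_sum[OF multrow_mat_carrier]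
  by (rule ext) (auto simp: space_Rn sum_lessThan_eq_single[of _ n])

lemma mat_app_addrow:
  assumes "x \<in> space (Rn n)" "k < n" "l < n" "k \<noteq> l"
  shows "mat_app n (addrow_mat n a k l) x = x(k := x k + a * x l)"
proof (rule ext)
  fix i
  consider "i \<ge> n" | "i = k" | "i < n" "i \<noteq> k" by linarith
  then show "mat_app n (addrow_mat n a k l) x i = (x(k := x k + a * x l)) i"
  proof cases
    case 1
    then show ?thesis using assms by (auto simp: space_Rn mat_app_def)
  next
    case 2
    then show ?thesis
      using assms by (simp add: mat_app_eq_sum sum_lessThan_eq_pair[of k n l])
  next
    case 3
    then show ?thesis
      using assms by (simp add: mat_app_eq_sum sum_lessThan_eq_single[of i n])
  qed
qed

definition linear_change_of_vars :: "nat \<Rightarrow> real mat \<Rightarrow> bool" where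
  "linear_change_of_vars n P \<longleftrightarrow> P \<in> carrier_mat n n \<and>
     (\<forall>f \<in> borel_measurable (Rn n).
        (\<integral>\<^sup>+x. f (mat_app n P x) \<partial>Rn n) = ennreal (1 / \<bar>det P\<bar>) * (\<integral>\<^sup>+x. f x \<partial>Rn n))"

lemma linear_change_of_vars_one: "linear_change_of_vars n (1\<^sub>m n)"
  unfolding linear_change_of_vars_def by (auto simp: mat_app_one intro!: nn_integral_cong)

lemma linear_change_of_vars_mult:
  assumes A: "linear_change_of_vars n A" and B: "linear_change_of_vars n B"
  shows "linear_change_of_vars n (A * B)"
proof -
  have Ac: "A \<in> carrier_mat n n" and Bc: "B \<in> carrier_mat n n"
    using A B by (auto simp: linear_change_of_vars_def)
  have "(\<integral>\<^sup>+x. f (mat_app n (A * B) x) \<partial>Rn n) = ennreal (1 / \<bar>det (A * B)\<bar>) * (\<integral>\<^sup>+x. f x \<partial>Rn n)"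
    if f[measurable]: "f \<in> borel_measurable (Rn n)" for f
  proof -
    have "(\<lambda>x. f (mat_app n A x)) \<in> borel_measurable (Rn n)"
      using measurable_comp[OF measurable_mat_app[OF Ac] f] by (simp add: o_def)
    then have "(\<integral>\<^sup>+x. f (mat_app n (A * B) x) \<partial>Rn n)
        = ennreal (1 / \<bar>det B\<bar>) * (\<integral>\<^sup>+x. f (mat_app n A x) \<partial>Rn n)"
      using B unfolding linear_change_of_vars_def mat_app_mult[OF Ac Bc]
      by (auto dest!: bspec[of _ _ "\<lambda>y. f (mat_app n A y)"])
    also have "\<dots> = ennreal (1 / \<bar>det B\<bar>) * (ennreal (1 / \<bar>det A\<bar>) * (\<integral>\<^sup>+x. f x \<partial>Rn n))"
      using A f unfolding linear_change_of_vars_def by simp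
    also have "\<dots> = ennreal (1 / \<bar>det (A * B)\<bar>) * (\<integral>\<^sup>+x. f x \<partial>Rn n)"
      by (simp add: det_mult[OF Ac Bc] mult.assoc[symmetric] ennreal_mult[symmetric] abs_mult mult.commute)
    finally show ?thesis .
  qed
  then show ?thesis using Ac Bc by (auto simp: linear_change_of_vars_def)
qed

lemma linear_change_of_vars_cong:
  assumes "linear_change_of_vars n A" "B \<in> carrier_mat n n" "\<bar>det B\<bar> = \<bar>det A\<bar>"
    and "\<And>x. x \<in> space (Rn n) \<Longrightarrow> mat_app n B x = mat_app n A x"
  shows "linear_change_of_vars n B"
  using assms(1-3) unfolding linear_change_of_vars_def by (auto simp: assms(4) cong: nn_integral_cong)

lemma linear_change_of_vars_multrow:
  assumes k: "k < n" and a: "a \<noteq> 0"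
  shows "linear_change_of_vars n (multrow_mat n k a)"
  unfolding linear_change_of_vars_def
proof (intro conjI ballI)
  fix f :: "(nat \<Rightarrow> real) \<Rightarrow> ennreal" assume f: "f \<in> borel_measurable (Rn n)"
  have "(\<integral>\<^sup>+x. f (mat_app n (multrow_mat n k a) x) \<partial>Rn n) = (\<integral>\<^sup>+x. f (x(k := a * x k + 0)) \<partial>Rn n)"
    by (rule nn_integral_cong) (simp add: mat_app_multrow k)
  also have "\<dots> = ennreal (1 / \<bar>a\<bar>) * (\<integral>\<^sup>+x. f x \<partial>Rn n)"
    by (rule nn_integral_PiM_coordinate_affine[OF k a _ _ f]) auto
  finally show "(\<integral>\<^sup>+x. f (mat_app n (multrow_mat n k a) x) \<partial>Rn n)
      = ennreal (1 / \<bar>det (multrow_mat n k a)\<bar>) * (\<integral>\<^sup>+x. f x \<partial>Rn n)"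
    using det_multrow_mat[of k n a] k by simp
qed simp

lemma linear_change_of_vars_addrow:
  assumes k: "k < n" and l: "l < n" and kl: "k \<noteq> l"
  shows "linear_change_of_vars n (addrow_mat n a k l)"
  unfolding linear_change_of_vars_def
proof (intro conjI ballI)
  fix f :: "(nat \<Rightarrow> real) \<Rightarrow> ennreal" assume f: "f \<in> borel_measurable (Rn n)"
  have "(\<integral>\<^sup>+x. f (mat_app n (addrow_mat n a k l) x) \<partial>Rn n) = (\<integral>\<^sup>+x. f (x(k := 1 * x k + a * x l)) \<partial>Rn n)"
    by (rule nn_integral_cong) (simp add: mat_app_addrow k l kl)
  also have "\<dots> = ennreal (1 / \<bar>1\<bar>) * (\<integral>\<^sup>+x. f x \<partial>Rn n)"
    by (rule nn_integral_PiM_coordinate_affine[OF k _ _ _ f]) (use l kl in auto)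
  finally show "(\<integral>\<^sup>+x. f (mat_app n (addrow_mat n a k l) x) \<partial>Rn n)
      = ennreal (1 / \<bar>det (addrow_mat n a k l)\<bar>) * (\<integral>\<^sup>+x. f x \<partial>Rn n)"
    using det_addrow_mat[of k l n a] kl by simp
qed simp

text \<open>A transposition of coordinates is the composite of three shears and a reflection:
  \<open>(x, y) \<mapsto> (x + y, y) \<mapsto> (x + y, -x) \<mapsto> (y, -x) \<mapsto> (y, x)\<close>.\<close>

lemma linear_change_of_vars_swaprows:
  assumes k: "k < n" and l: "l < n"
  shows "linear_change_of_vars n (swaprows_mat n k l)"
proof (cases "k = l")
  case True
  then have "swaprows_mat n k l = (1\<^sub>m n :: real mat)" by (intro eq_matI) auto
  then show ?thesis using linear_change_of_vars_one by simp
next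
  case kl: False
  define S1 :: "real mat" where "S1 = addrow_mat n 1 k l"
  define S2 :: "real mat" where "S2 = addrow_mat n (-1) l k"
  define F :: "real mat" where "F = multrow_mat n l (-1)"
  have carrier: "S1 \<in> carrier_mat n n" "S2 \<in> carrier_mat n n" "F \<in> carrier_mat n n"
    by (auto simp: S1_def S2_def F_def)
  have composite: "linear_change_of_vars n (F * (S1 * (S2 * S1)))"
    unfolding S1_def S2_def F_def
    by (intro linear_change_of_vars_mult linear_change_of_vars_addrow linear_change_of_vars_multrow)
      (use k l kl in auto)
  show ?thesis
  proof (rule linear_change_of_vars_cong[OF composite])
    have "det S1 = 1" "det S2 = 1" "det F = -1"
      using det_addrow_mat[of k l n 1] det_addrow_mat[of l k n "-1"] det_multrow_mat[of l n "-1::real"] k l kl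
      by (auto simp: S1_def S2_def F_def)
    then have "det (F * (S1 * (S2 * S1))) = -1"
      using carrier by (simp add: det_mult[of _ n])
    then show "\<bar>det (swaprows_mat n k l)\<bar> = \<bar>det (F * (S1 * (S2 * S1)))\<bar>"
      using det_swaprows_mat[OF k l kl, where 'a=real] by simp
    fix x assume x: "x \<in> space (Rn n)"
    have "mat_app n (F * (S1 * (S2 * S1))) x = mat_app n F (mat_app n S1 (mat_app n S2 (mat_app n S1 x)))"
      using carrier by (simp add: mat_app_mult)
    also have "\<dots> = x(k := x l, l := x k)"
    proof -
      have step1: "mat_app n S1 x = x(k := x k + x l)"
        using x k l kl by (simp add: S1_def mat_app_addrow)
      have step2: "mat_app n S2 (mat_app n S1 x) = x(k := x k + x l, l := - x k)"
        using mat_app_in_space[of n S1 x] k l kl unfolding step1 by (simp add: S2_def mat_app_addrow)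
      have step3: "mat_app n S1 (mat_app n S2 (mat_app n S1 x)) = x(k := x l, l := - x k)"
        using mat_app_in_space[of n S2 "mat_app n S1 x"] k l kl unfolding step2
        by (simp add: S1_def mat_app_addrow fun_upd_twist)
      show ?thesis
        using mat_app_in_space[of n S1 "mat_app n S2 (mat_app n S1 x)"] k l kl unfolding step3
        by (auto simp: F_def mat_app_multrow fun_upd_twist)
    qed
    also have "\<dots> = mat_app n (swaprows_mat n k l) x"
      unfolding mat_app_eq_sum[OF swaprows_mat_carrier]
    proof (rule ext)
      fix i show "(x(k := x l, l := x k)) i = (\<lambda>i\<in>{..<n}. \<Sum>j<n. swaprows_mat n k l $$ (i, j) * x j) i"
        using x k l kl
        by (cases "i < n")
          (auto simp: space_Rn sum_lessThan_eq_single[of i n] sum_lessThan_eq_single[of k n]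
             sum_lessThan_eq_single[of l n])
    qed
    finally show "mat_app n (swaprows_mat n k l) x = mat_app n (F * (S1 * (S2 * S1))) x" by simp
  qed simp
qed

lemma linear_change_of_vars_elementary_products:
  "P \<in> elementary_products n \<Longrightarrow> linear_change_of_vars n P"
proof (induction rule: elementary_products.induct)
  case one
  then show ?case by (rule linear_change_of_vars_one)
next
  case (multrow P k a)
  then show ?case by (intro linear_change_of_vars_mult linear_change_of_vars_multrow)
next
  case (addrow P k l a)
  then show ?case by (intro linear_change_of_vars_mult linear_change_of_vars_addrow)
next
  case (swaprows P k l)
  then show ?case by (intro linear_change_of_vars_mult linear_change_of_vars_swaprows)
qed

theorem nn_integral_mat_app:
  assumes A: "A \<in> carrier_mat n n" and dA: "det A \<noteq> 0"
    and f: "f \<in> borel_measurable (Rn n)"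
  shows "(\<integral>\<^sup>+x. f (mat_app n A x) \<partial>Rn n) = ennreal (1 / \<bar>det A\<bar>) * (\<integral>\<^sup>+x. f x \<partial>Rn n)"
proof -
  obtain P where P: "P \<in> elementary_products n" and PA: "P * A = 1\<^sub>m n"
    using invertible_elementary_products[OF A dA] .
  have Pc: "P \<in> carrier_mat n n" using elementary_products_carrier[OF P] .
  have AP: "A * P = 1\<^sub>m n" by (rule mat_mult_left_right_inverse[OF Pc A PA])
  have det_PA: "\<bar>det P\<bar> * \<bar>det A\<bar> = 1" using det_mult[OF Pc A] PA by (simp flip: abs_mult)
  have "(\<lambda>x. f (mat_app n A x)) \<in> borel_measurable (Rn n)"
    using measurable_comp[OF measurable_mat_app[OF A] f] by (simp add: o_def)
  then have "(\<integral>\<^sup>+x. f (mat_app n A (mat_app n P x)) \<partial>Rn n)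
      = ennreal (1 / \<bar>det P\<bar>) * (\<integral>\<^sup>+x. f (mat_app n A x) \<partial>Rn n)"
    using linear_change_of_vars_elementary_products[OF P] unfolding linear_change_of_vars_def
    by (auto dest!: bspec[of _ _ "\<lambda>y. f (mat_app n A y)"])
  moreover have "(\<integral>\<^sup>+x. f (mat_app n A (mat_app n P x)) \<partial>Rn n) = (\<integral>\<^sup>+x. f x \<partial>Rn n)"
    by (rule nn_integral_cong) (simp add: mat_app_mult[OF A Pc, symmetric] AP mat_app_one)
  ultimately have eq: "(\<integral>\<^sup>+x. f x \<partial>Rn n) = ennreal (1 / \<bar>det P\<bar>) * (\<integral>\<^sup>+x. f (mat_app n A x) \<partial>Rn n)"
    by simp
  have "ennreal (1 / \<bar>det A\<bar>) * (\<integral>\<^sup>+x. f x \<partial>Rn n)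
      = (ennreal (1 / \<bar>det A\<bar>) * ennreal (1 / \<bar>det P\<bar>)) * (\<integral>\<^sup>+x. f (mat_app n A x) \<partial>Rn n)"
    unfolding eq by (simp add: mult.assoc)
  also have "ennreal (1 / \<bar>det A\<bar>) * ennreal (1 / \<bar>det P\<bar>) = 1"
    using det_PA by (simp add: ennreal_mult[symmetric] mult.commute)
  finally show ?thesis by simp
qed

section \<open>Linear images of Gaussian vectors\<close>

lemma distr_mat_app_density:
  assumes A: "A \<in> carrier_mat n n" and dA: "det A \<noteq> 0"
    and [measurable]: "g \<in> borel_measurable (Rn n)" "h \<in> borel_measurable (Rn n)"
    and h_mat_app: "\<And>x. x \<in> space (Rn n) \<Longrightarrow> h (mat_app n A x) = ennreal (1 / \<bar>det A\<bar>) * g x"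
  shows "distr (density (Rn n) g) (Rn n) (mat_app n A) = density (Rn n) h"
proof (rule measure_eqI)
  fix S assume "S \<in> sets (distr (density (Rn n) g) (Rn n) (mat_app n A))"
  then have S[measurable]: "S \<in> sets (Rn n)" by simp
  have [measurable]: "mat_app n A -` S \<inter> space (Rn n) \<in> sets (Rn n)"
    using measurable_sets[OF measurable_mat_app[OF A] S] .
  have "ennreal (1 / \<bar>det A\<bar>) * (\<integral>\<^sup>+y. h y * indicator S y \<partial>Rn n)
      = (\<integral>\<^sup>+x. h (mat_app n A x) * indicator S (mat_app n A x) \<partial>Rn n)"
    using nn_integral_mat_app[OF A dA, of "\<lambda>y. h y * indicator S y"] by simp
  also have "\<dots> = (\<integral>\<^sup>+x. ennreal (1 / \<bar>det A\<bar>) * (g x * indicator S (mat_app n A x)) \<partial>Rn n)"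
    by (rule nn_integral_cong) (simp add: h_mat_app mult.assoc)
  also have "\<dots> = ennreal (1 / \<bar>det A\<bar>) * (\<integral>\<^sup>+x. g x * indicator S (mat_app n A x) \<partial>Rn n)"
    using A by (intro nn_integral_cmult) measurable
  finally have "(\<integral>\<^sup>+y. h y * indicator S y \<partial>Rn n) = (\<integral>\<^sup>+x. g x * indicator S (mat_app n A x) \<partial>Rn n)"
    using dA by (simp add: ennreal_mult_cancel_left)
  also have "\<dots> = (\<integral>\<^sup>+x. g x * indicator (mat_app n A -` S \<inter> space (Rn n)) x \<partial>Rn n)"
    by (rule nn_integral_cong) (simp add: indicator_def)
  finally show "emeasure (distr (density (Rn n) g) (Rn n) (mat_app n A)) S = emeasure (density (Rn n) h) S"
    using A by (simp add: emeasure_distr emeasure_density)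
qed simp

lemma minv_mult_transpose:
  assumes A: "A \<in> carrier_mat n n" and B: "B \<in> carrier_mat n n"
    and AB: "A * B = 1\<^sub>m n" and BA: "B * A = 1\<^sub>m n"
  shows "minv (A * transpose_mat A) = transpose_mat B * B"
proof (rule minv_eqI)
  have At: "transpose_mat A \<in> carrier_mat n n" and Bt: "transpose_mat B \<in> carrier_mat n n"
    using A B by auto
  have AtBt: "transpose_mat A * transpose_mat B = 1\<^sub>m n"
    by (metis BA transpose_mult[OF B A] transpose_one)
  have BtAt: "transpose_mat B * transpose_mat A = 1\<^sub>m n"
    by (metis AB transpose_mult[OF A B] transpose_one)
  have "A * transpose_mat A * (transpose_mat B * B) = A * ((transpose_mat A * transpose_mat B) * B)"
    using A At Bt B by (simp add: assoc_mult_mat[of _ n n _ n _ n])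
  then show "A * transpose_mat A * (transpose_mat B * B) = 1\<^sub>m n" using AtBt AB B by simp
  have "transpose_mat B * B * (A * transpose_mat A) = transpose_mat B * ((B * A) * transpose_mat A)"
    using A At Bt B by (simp add: assoc_mult_mat[of _ n n _ n _ n])
  then show "transpose_mat B * B * (A * transpose_mat A) = 1\<^sub>m n" using BA BtAt At by simp
qed (use A B in auto)

lemma scalar_prod_gram_inverse:
  fixes A B :: "real mat"
  assumes A: "A \<in> carrier_mat n n" and B: "B \<in> carrier_mat n n" and BA: "B * A = 1\<^sub>m n"
    and v: "v \<in> carrier_vec n"
  shows "(A *\<^sub>v v) \<bullet> ((transpose_mat B * B) *\<^sub>v (A *\<^sub>v v)) = v \<bullet> v"
proof -
  have Av: "A *\<^sub>v v \<in> carrier_vec n" using A v by simp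
  have BAv: "B *\<^sub>v (A *\<^sub>v v) = v"
    using assoc_mult_mat_vec[OF B A v, symmetric] BA v by simp
  have "(A *\<^sub>v v) \<bullet> ((transpose_mat B * B) *\<^sub>v (A *\<^sub>v v)) = (A *\<^sub>v v) \<bullet> (transpose_mat B *\<^sub>v v)"
    using assoc_mult_mat_vec[of "transpose_mat B" n n B n "A *\<^sub>v v"] B Av BAv by simp
  also have "\<dots> = (transpose_mat B *\<^sub>v v) \<bullet> (A *\<^sub>v v)"
    by (rule comm_scalar_prod[of _ n]) (use Av B v in auto)
  also have "\<dots> = v \<bullet> v"
    using transpose_vec_mult_scalar[OF B Av v] BAv by simp
  finally show ?thesis .
qed

lemma powr_minus_half_square: "(d::real) \<noteq> 0 \<Longrightarrow> (d * d) powr (- 1 / 2) = 1 / \<bar>d\<bar>"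
  by (simp add: powr_minus_divide powr_half_sqrt real_sqrt_abs[of d, unfolded power2_eq_square])

lemma measurable_quadratic_form:
  assumes "Q \<in> carrier_mat n n"
  shows "(\<lambda>x. vec n x \<bullet> (Q *\<^sub>v vec n x)) \<in> borel_measurable (Rn n)"
  using assms by (simp add: scalar_prod_def)

theorem distr_mvnormal_mat_app:
  assumes A: "A \<in> carrier_mat n n" and dA: "det A \<noteq> 0"
    and \<epsilon>: "\<epsilon> \<in> measurable \<Omega> (Rn n)" and std: "distr \<Omega> (Rn n) \<epsilon> = mvnormal n (1\<^sub>m n)"
  shows "distr \<Omega> (Rn n) (\<lambda>\<omega>. mat_app n A (\<epsilon> \<omega>)) = mvnormal n (A * transpose_mat A)"
proof -
  obtain B where B: "B \<in> carrier_mat n n" "A * B = 1\<^sub>m n" "B * A = 1\<^sub>m n"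
    using inverse_mat_exists[OF A dA] .
  define \<Sigma> where "\<Sigma> = A * transpose_mat A"
  define c where "c = (2 * pi) powr (- real n / 2)"
  define \<phi> where "\<phi> = (\<lambda>S x. ennreal (c * det S powr (- 1 / 2) * exp (- (vec n x \<bullet> (minv S *\<^sub>v vec n x)) / 2)))"
  have mvnormal: "mvnormal n S = density (Rn n) (\<phi> S)" for S
    by (simp add: mvnormal_def \<phi>_def c_def)
  have minv_\<Sigma>: "minv \<Sigma> = transpose_mat B * B"
    unfolding \<Sigma>_def using minv_mult_transpose[OF A B] .
  have minv_one: "minv (1\<^sub>m n) = (1\<^sub>m n :: real mat)" by (rule minv_eqI) auto
  have [measurable]: "(\<lambda>x. vec n x \<bullet> (minv \<Sigma> *\<^sub>v vec n x)) \<in> borel_measurable (Rn n)"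
    "(\<lambda>x. vec n x \<bullet> (minv (1\<^sub>m n) *\<^sub>v vec n x)) \<in> borel_measurable (Rn n)"
    by (rule measurable_quadratic_form, use B(1) in \<open>simp add: minv_\<Sigma> minv_one\<close>)+
  have \<phi>_measurable: "\<phi> \<Sigma> \<in> borel_measurable (Rn n)" "\<phi> (1\<^sub>m n) \<in> borel_measurable (Rn n)"
    unfolding \<phi>_def by measurable
  have "\<phi> \<Sigma> (mat_app n A x) = ennreal (1 / \<bar>det A\<bar>) * \<phi> (1\<^sub>m n) x" for x
  proof -
    have "vec n (mat_app n A x) = A *\<^sub>v vec n x"
      unfolding mat_app_def using A by (intro eq_vecI) auto
    then have "vec n (mat_app n A x) \<bullet> (minv \<Sigma> *\<^sub>v vec n (mat_app n A x)) = vec n x \<bullet> vec n x"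
      using scalar_prod_gram_inverse[OF A B(1) B(3)] minv_\<Sigma> by simp
    moreover have "det \<Sigma> powr (- 1 / 2) = 1 / \<bar>det A\<bar>"
      unfolding \<Sigma>_def det_mult_transpose_self[OF A] by (rule powr_minus_half_square[OF dA])
    moreover have "c \<ge> 0" unfolding c_def by simp
    ultimately show ?thesis
      unfolding \<phi>_def minv_one by (simp add: ennreal_mult[symmetric] mult_ac)
  qed
  then have "distr (density (Rn n) (\<phi> (1\<^sub>m n))) (Rn n) (mat_app n A) = density (Rn n) (\<phi> \<Sigma>)"
    using distr_mat_app_density[OF A dA \<phi>_measurable(2,1)] by blast
  moreover have "distr \<Omega> (Rn n) (\<lambda>\<omega>. mat_app n A (\<epsilon> \<omega>)) = distr (distr \<Omega> (Rn n) \<epsilon>) (Rn n) (mat_app n A)"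
    using distr_distr[OF measurable_mat_app[OF A] \<epsilon>] by (simp add: o_def)
  ultimately show ?thesis unfolding std mvnormal \<Sigma>_def by simp
qed

theorem mainTheorem1:
  fixes M N :: nat and t :: "nat \<Rightarrow> real"
    and \<Sigma> K C\<^sub>\<Sigma> C\<^sub>R C\<^sub>K E \<Lambda> :: "real mat"
    and \<Omega> :: "'a measure" and \<epsilon> :: "'a \<Rightarrow> nat \<Rightarrow> real"
  assumes "M \<ge> 1" and "N \<ge> 1"
    and "0 < t 0" and "\<And>l. Suc l < N \<Longrightarrow> t l < t (Suc l)"
    and "sym_pos_def (M * N) \<Sigma>" and "sym_pos_def M K"
    and "is_cholesky (M * N) C\<^sub>\<Sigma> \<Sigma>"
    and "is_cholesky N C\<^sub>R (min_mat N t)"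
    and "is_cholesky M C\<^sub>K K"
    and "is_eigendecomp (N * M) (kron (min_mat N t) K) E \<Lambda>"
    and "prob_space \<Omega>"
    and "\<epsilon> \<in> measurable \<Omega> (Rn (M * N))"
    and "distr \<Omega> (Rn (M * N)) \<epsilon> = mvnormal (M * N) (1\<^sub>m (M * N))"
  shows "distr \<Omega> (Rn (M * N))
           (\<lambda>\<omega>. mat_app (M * N)
                 (C\<^sub>\<Sigma> * kron (minv C\<^sub>R) (minv C\<^sub>K) * E * diag_sqrt \<Lambda>) (\<epsilon> \<omega>))
         = mvnormal (M * N) \<Sigma>"
proof -
  define A where "A = C\<^sub>\<Sigma> * kron (minv C\<^sub>R) (minv C\<^sub>K) * E * diag_sqrt \<Lambda>"
  have A: "A \<in> carrier_mat (M * N) (M * N)" and AA: "A * transpose_mat A = \<Sigma>"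
    using kpa_sampling_matrix[OF assms(7-10)] unfolding A_def by auto
  have C\<^sub>\<Sigma>: "C\<^sub>\<Sigma> \<in> carrier_mat (M * N) (M * N)" "\<Sigma> = C\<^sub>\<Sigma> * transpose_mat C\<^sub>\<Sigma>"
    using assms(7) by (auto simp: is_cholesky_def)
  have "det A * det A = det C\<^sub>\<Sigma> * det C\<^sub>\<Sigma>"
    using det_mult_transpose_self[OF A] det_mult_transpose_self[OF C\<^sub>\<Sigma>(1)] AA C\<^sub>\<Sigma>(2) by simp
  then have "det A \<noteq> 0" using det_cholesky_pos[OF assms(7)] by auto
  then have "distr \<Omega> (Rn (M * N)) (\<lambda>\<omega>. mat_app (M * N) A (\<epsilon> \<omega>)) = mvnormal (M * N) \<Sigma>"
    using distr_mvnormal_mat_app[OF A _ assms(12,13)] AA by simp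
  then show ?thesis unfolding A_def .
qed

end
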